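(* Let $\mu$ be a Radon measure on $\mathbb{R}^N$ with $\mu\ll\mathcal H^{N-1}$, let $E$ be a bounded set of finite perimeter, $u_k=\chi_E*\rho_{1/k}$ and $A_{k;1/2}=\{y:u_k(y)>\frac12\}$. Then for every $\varepsilon>0$ there exists $k^*=k^*(\varepsilon)$ such that for $k\ge k^*$, $$\|\mu\|(E^1\setminus A_{k;1/2})<\varepsilon\quad\text{and}\quad\|\mu\|(A_{k;1/2}\setminus E)<\varepsilon.$$
   Context: $D(E,y)=\lim_{r\to0}|E\cap B(y,r)|/|B(y,r)|$, $E^\alpha=\{D(E,\cdot)=\alpha\}$, $\partial^mE=\mathbb{R}^N\setminus(E^0\cup E^1)$; the representative $E=E^1\cup\partial^mE$ is used. $\rho$ is a nonnegative symmetric $C_c^\infty$ mollifier supported in the unit ball with integral 1, $\rho_\varepsilon(y)=\varepsilon^{-N}\rho(y/\varepsilon)$. $\|\mu\|$ is the total variation of $\mu$. *)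

theory Defs
  imports "HOL-Analysis.Analysis"
begin

definition density_ratio :: "'a::euclidean_space set \<Rightarrow> 'a \<Rightarrow> real \<Rightarrow> real" where
  "density_ratio E y r = measure lebesgue (E \<inter> ball y r) / measure lebesgue (ball y r)"

definition density_pts :: "'a::euclidean_space set \<Rightarrow> real \<Rightarrow> 'a set" where
  "density_pts E \<alpha> = {y. (density_ratio E y \<longlongrightarrow> \<alpha>) (at_right 0)}"

definition meas_boundary :: "'a::euclidean_space set \<Rightarrow> 'a set" where
  "meas_boundary E = UNIV - (density_pts E 0 \<union> density_pts E 1)"

definition omega_const :: "real \<Rightarrow> real" where
  "omega_const s = pi powr (s / 2) / Gamma (s / 2 + 1)"

text \<open>contribution of one covering set: omega_s (diam C / 2)^s, with 0^0 = 1 for nonempty C\<close>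
definition haus_term :: "real \<Rightarrow> 'a::euclidean_space set \<Rightarrow> real" where
  "haus_term s C = (if C = {} then 0 else if s = 0 then 1
                    else omega_const s * (diameter C / 2) powr s)"

definition hausdorff_pre :: "real \<Rightarrow> real \<Rightarrow> 'a::euclidean_space set \<Rightarrow> ennreal" where
  "hausdorff_pre s \<delta> A =
     (INF C \<in> {C :: nat \<Rightarrow> 'a set. A \<subseteq> (\<Union>i. C i) \<and> (\<forall>i. bounded (C i) \<and> diameter (C i) \<le> \<delta>)}.
        (\<Sum>i. ennreal (haus_term s (C i))))"

definition hausdorff_measure :: "real \<Rightarrow> 'a::euclidean_space set \<Rightarrow> ennreal" where
  "hausdorff_measure s A = (SUP \<delta> \<in> {0<..}. hausdorff_pre s \<delta> A)"

definition divergence :: "('a::euclidean_space \<Rightarrow> 'a) \<Rightarrow> 'a \<Rightarrow> real" where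
  "divergence \<phi> x = (\<Sum>b\<in>Basis. frechet_derivative \<phi> (at x) b \<bullet> b)"

definition perimeter_test :: "('a::euclidean_space \<Rightarrow> 'a) \<Rightarrow> bool" where
  "perimeter_test \<phi> \<longleftrightarrow>
     (\<forall>x. \<phi> differentiable at x) \<and>
     (\<forall>b\<in>Basis. continuous_on UNIV (\<lambda>x. frechet_derivative \<phi> (at x) b)) \<and>
     (\<exists>R. \<forall>x. norm x > R \<longrightarrow> \<phi> x = 0) \<and>
     (\<forall>x. norm (\<phi> x) \<le> 1)"

definition finite_perimeter :: "'a::euclidean_space set \<Rightarrow> bool" where
  "finite_perimeter E \<longleftrightarrow> E \<in> sets lebesgue \<and>
     (\<exists>C. \<forall>\<phi>. perimeter_test \<phi> \<longrightarrow> (LINT x:E|lebesgue. divergence \<phi> x) \<le> C)"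

coinductive smooth_fun :: "('a::euclidean_space \<Rightarrow> real) \<Rightarrow> bool" where
  "(\<forall>x. f differentiable at x) \<Longrightarrow>
   (\<forall>b\<in>Basis. smooth_fun (\<lambda>x. frechet_derivative f (at x) b)) \<Longrightarrow> smooth_fun f"

definition mollifier :: "('a::euclidean_space \<Rightarrow> real) \<Rightarrow> bool" where
  "mollifier \<rho> \<longleftrightarrow> smooth_fun \<rho> \<and> (\<forall>x. \<rho> x \<ge> 0) \<and> (\<forall>x. \<rho> (- x) = \<rho> x) \<and>
     (\<forall>x. x \<notin> cball 0 1 \<longrightarrow> \<rho> x = 0) \<and>
     integrable lebesgue \<rho> \<and> integral\<^sup>L lebesgue \<rho> = 1"

definition mollifier_scaled :: "('a::euclidean_space \<Rightarrow> real) \<Rightarrow> real \<Rightarrow> 'a \<Rightarrow> real" where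
  "mollifier_scaled \<rho> \<epsilon> y = (1 / \<epsilon>) ^ DIM('a) * \<rho> ((1 / \<epsilon>) *\<^sub>R y)"

definition mollify_set :: "('a::euclidean_space \<Rightarrow> real) \<Rightarrow> real \<Rightarrow> 'a set \<Rightarrow> 'a \<Rightarrow> real" where
  "mollify_set \<rho> \<epsilon> E y = (LINT x:E|lebesgue. mollifier_scaled \<rho> \<epsilon> (y - x))"

definition radon_measure :: "'a::euclidean_space measure \<Rightarrow> bool" where
  "radon_measure M \<longleftrightarrow> sets M = sets borel \<and> (\<forall>K. compact K \<longrightarrow> emeasure M K < \<infinity>)"

text \<open>A signed Radon measure mu = muP - muN with muP, muN Radon and mutually singular;
  its total variation is ||mu|| = muP + muN.\<close>
definition signed_radon :: "'a::euclidean_space measure \<Rightarrow> 'a measure \<Rightarrow> bool" where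
  "signed_radon \<mu>P \<mu>N \<longleftrightarrow> radon_measure \<mu>P \<and> radon_measure \<mu>N \<and>
     (\<exists>S \<in> sets borel. emeasure \<mu>P (UNIV - S) = 0 \<and> emeasure \<mu>N S = 0)"

definition total_variation :: "'a::euclidean_space measure \<Rightarrow> 'a measure \<Rightarrow> 'a set \<Rightarrow> ennreal" where
  "total_variation \<mu>P \<mu>N A = emeasure \<mu>P A + emeasure \<mu>N A"

definition abs_cont_hausdorff :: "'a::euclidean_space measure \<Rightarrow> 'a measure \<Rightarrow> bool" where
  "abs_cont_hausdorff \<mu>P \<mu>N \<longleftrightarrow>
     (\<forall>B \<in> sets borel. hausdorff_measure (real DIM('a) - 1) B = 0 \<longrightarrow> total_variation \<mu>P \<mu>N B = 0)"

end

(* Write D_r(E,y) = |E n B(y,r)| / |B(y,r)| and u_eps = chi_E * rho_eps. Since rho_eps is at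
   most M eps^-N and vanishes outside B(0,eps), u_eps(y) <= K D_{2 eps}(E,y) with
   K = M 2^N |B(0,1)|; applied to the complement of E this also gives
   1 - u_eps(y) <= K (1 - D_{2 eps}(E,y)). With the representative E = E^1 u d^m E every point
   outside E has density 0, so at each point of E^1 - A_k and of A_k - E the ratio D_{2/k}(E,y)
   is at distance at least 1/(2K) from its limit as k -> oo. Hence every point lies in only
   finitely many of these sets; as they all stay in a fixed ball, which has finite Radon
   measure, continuity from above makes their total variation tend to 0. *)

theory Submission
  imports Defs
begin

lemma mollifier_continuous:
  assumes "mollifier \<rho>"
  shows "continuous_on UNIV \<rho>"
proof -
  have "smooth_fun \<rho>" using assms by (simp add: mollifier_def)
  then have "\<forall>x. \<rho> differentiable at x" by cases auto
  then show ?thesis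
    by (simp add: continuous_at_imp_continuous_on differentiable_imp_continuous_within)
qed

lemma borel_measurable_mollifier: "mollifier \<rho> \<Longrightarrow> \<rho> \<in> borel_measurable borel"
  using mollifier_continuous borel_measurable_continuous_onI by blast

lemma mollifier_bounded:
  assumes "mollifier \<rho>"
  obtains M where "M > 0" "\<And>x. \<rho> x \<le> M"
proof -
  have "compact (\<rho> ` cball 0 1)"
    using mollifier_continuous[OF assms]
    by (intro compact_continuous_image) (auto intro: continuous_on_subset)
  then obtain B where B: "\<And>z. z \<in> \<rho> ` cball 0 1 \<Longrightarrow> norm z \<le> B"
    by (meson compact_imp_bounded bounded_iff)
  show ?thesis
  proof (rule that[of "max B 1"])
    show "\<rho> x \<le> max B 1" for x
      using B[of "\<rho> x"] assms by (cases "x \<in> cball 0 1") (auto simp: mollifier_def)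
  qed simp
qed

lemma nn_integral_mollifier_scaled:
  assumes "mollifier \<rho>" "\<epsilon> > 0"
  shows "(\<integral>\<^sup>+x. ennreal (mollifier_scaled \<rho> \<epsilon> (y - x)) \<partial>lborel) = 1"
proof -
  define c where "c = - (1/\<epsilon>)"
  define t where "t = (1/\<epsilon>) *\<^sub>R y"
  have "c \<noteq> 0" using assms by (simp add: c_def)
  have [measurable]: "\<rho> \<in> borel_measurable borel" by (rule borel_measurable_mollifier[OF assms(1)])
  have \<rho>: "integrable lebesgue \<rho>" "integral\<^sup>L lebesgue \<rho> = 1" "\<And>x. \<rho> x \<ge> 0"
    using assms by (auto simp: mollifier_def)
  have "1 = (\<integral>\<^sup>+x. ennreal (\<rho> x) \<partial>lebesgue)"
    using \<rho> by (subst nn_integral_eq_integral) auto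
  also have "\<dots> = (\<integral>\<^sup>+x. ennreal (\<rho> x) \<partial>lborel)"
    by (simp add: nn_integral_completion)
  also have "\<dots> = (\<integral>\<^sup>+x. ennreal (\<rho> x) \<partial>density (distr lborel borel (\<lambda>x. t + c *\<^sub>R x)) (\<lambda>_. \<bar>c\<bar>^DIM('a)))"
    using lborel_affine[OF \<open>c \<noteq> 0\<close>, of t] by simp
  also have "\<dots> = (\<integral>\<^sup>+x. \<bar>c\<bar>^DIM('a) * ennreal (\<rho> (t + c *\<^sub>R x)) \<partial>lborel)"
    by (simp add: nn_integral_density nn_integral_distr)
  also have "\<dots> = (\<integral>\<^sup>+x. ennreal (mollifier_scaled \<rho> \<epsilon> (y - x)) \<partial>lborel)"
  proof (rule nn_integral_cong)
    fix x :: 'a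
    have "t + c *\<^sub>R x = (1/\<epsilon>) *\<^sub>R (y - x)" by (simp add: t_def c_def algebra_simps)
    moreover have "\<bar>c\<bar> = 1/\<epsilon>" using assms by (simp add: c_def)
    ultimately show "ennreal (\<bar>c\<bar>^DIM('a)) * ennreal (\<rho> (t + c *\<^sub>R x)) = ennreal (mollifier_scaled \<rho> \<epsilon> (y - x))"
      using \<rho>(3) by (simp add: mollifier_scaled_def ennreal_mult'')
  qed
  finally show ?thesis by simp
qed

lemma has_bochner_integral_mollifier_scaled:
  assumes "mollifier \<rho>" "\<epsilon> > 0"
  shows "has_bochner_integral lebesgue (\<lambda>x. mollifier_scaled \<rho> \<epsilon> (y - x)) 1"
proof (rule has_bochner_integral_nn_integral)
  have [measurable]: "\<rho> \<in> borel_measurable borel" by (rule borel_measurable_mollifier[OF assms(1)])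
  have borel: "(\<lambda>x. mollifier_scaled \<rho> \<epsilon> (y - x)) \<in> borel_measurable borel"
    unfolding mollifier_scaled_def by measurable
  show "(\<lambda>x. mollifier_scaled \<rho> \<epsilon> (y - x)) \<in> borel_measurable lebesgue"
    by (rule measurable_completion) (simp add: borel)
  show "AE x in lebesgue. 0 \<le> mollifier_scaled \<rho> \<epsilon> (y - x)"
    using assms by (simp add: mollifier_scaled_def mollifier_def)
  show "(\<integral>\<^sup>+x. ennreal (mollifier_scaled \<rho> \<epsilon> (y - x)) \<partial>lebesgue) = ennreal 1"
    using nn_integral_mollifier_scaled[OF assms] borel by (simp add: nn_integral_completion)
qed simp

lemma mollifier_scaled_le_indicator_ball:
  fixes y :: "'a::euclidean_space"
  assumes "mollifier \<rho>" "\<epsilon> > 0" "\<And>x. \<rho> x \<le> M"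
  shows "mollifier_scaled \<rho> \<epsilon> (y - x) \<le> (1/\<epsilon>)^DIM('a) * M * indicator (ball y (2*\<epsilon>)) x"
proof (cases "x \<in> ball y (2*\<epsilon>)")
  case True
  then show ?thesis
    using assms(2,3) by (simp add: mollifier_scaled_def mult_left_mono)
next
  case False
  then have "2*\<epsilon> \<le> norm (y - x)"
    by (simp add: dist_norm)
  then have "1 < norm (y - x) / \<epsilon>"
    using assms(2) by (simp add: less_divide_eq)
  also have "\<dots> = norm ((1/\<epsilon>) *\<^sub>R (y - x))"
    using assms(2) by simp
  finally have "\<rho> ((1/\<epsilon>) *\<^sub>R (y - x)) = 0"
    using assms(1) unfolding mollifier_def mem_cball_0 by (meson not_le)
  then show ?thesis
    using False by (simp add: mollifier_scaled_def)
qed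

lemma mollify_set_le_measure_Int_ball:
  fixes y :: "'a::euclidean_space"
  assumes "mollifier \<rho>" "\<epsilon> > 0" "\<And>x. \<rho> x \<le> M" "F \<in> sets lebesgue"
  shows "mollify_set \<rho> \<epsilon> F y \<le> (1/\<epsilon>)^DIM('a) * M * measure lebesgue (F \<inter> ball y (2*\<epsilon>))"
proof -
  have "F \<inter> ball y (2*\<epsilon>) \<in> lmeasurable"
    using fmeasurable_Int_fmeasurable[OF lmeasurable_ball assms(4)] by (simp add: Int_commute)
  then have indicator_integrable: "integrable lebesgue (indicator (F \<inter> ball y (2*\<epsilon>)) :: 'a \<Rightarrow> real)"
    by (intro integrable_real_indicator) (auto simp: fmeasurable_def)
  have "mollify_set \<rho> \<epsilon> F y = (\<integral>x. indicator F x * mollifier_scaled \<rho> \<epsilon> (y - x) \<partial>lebesgue)"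
    by (simp add: mollify_set_def set_lebesgue_integral_def)
  also have "\<dots> \<le> (\<integral>x. (1/\<epsilon>)^DIM('a) * M * indicator (F \<inter> ball y (2*\<epsilon>)) x \<partial>lebesgue)"
  proof (rule integral_mono)
    show "integrable lebesgue (\<lambda>x. indicator F x * mollifier_scaled \<rho> \<epsilon> (y - x))"
      using integrable_mult_indicator[OF assms(4)
          integrable.intros[OF has_bochner_integral_mollifier_scaled[OF assms(1,2)]]]
      by simp
    show "indicator F x * mollifier_scaled \<rho> \<epsilon> (y - x)
        \<le> (1/\<epsilon>)^DIM('a) * M * indicator (F \<inter> ball y (2*\<epsilon>)) x" for x
      using mollifier_scaled_le_indicator_ball[OF assms(1-3), of y x] by (auto simp: indicator_def)
  qed (use indicator_integrable in simp)
  also have "\<dots> = (1/\<epsilon>)^DIM('a) * M * measure lebesgue (F \<inter> ball y (2*\<epsilon>))"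
    by simp
  finally show ?thesis .
qed

lemma mollify_set_Compl:
  assumes "mollifier \<rho>" "\<epsilon> > 0" "E \<in> sets lebesgue"
  shows "mollify_set \<rho> \<epsilon> (- E) y = 1 - mollify_set \<rho> \<epsilon> E y"
proof -
  let ?\<phi> = "\<lambda>x. mollifier_scaled \<rho> \<epsilon> (y - x)"
  have \<phi>: "integrable lebesgue ?\<phi>" "integral\<^sup>L lebesgue ?\<phi> = 1"
    using has_bochner_integral_mollifier_scaled[OF assms(1,2)] by (auto simp: has_bochner_integral_iff)
  have "mollify_set \<rho> \<epsilon> (- E) y = (\<integral>x. ?\<phi> x - indicator E x * ?\<phi> x \<partial>lebesgue)"
    unfolding mollify_set_def set_lebesgue_integral_def
    by (rule Bochner_Integration.integral_cong) (auto simp: indicator_def)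
  also have "\<dots> = 1 - mollify_set \<rho> \<epsilon> E y"
    using \<phi> integrable_mult_indicator[OF assms(3) \<phi>(1)]
    unfolding mollify_set_def set_lebesgue_integral_def
    by (subst Bochner_Integration.integral_diff) auto
  finally show ?thesis .
qed

lemma density_ratio_Compl:
  assumes "E \<in> sets lebesgue" "r > 0"
  shows "density_ratio (- E) y r = 1 - density_ratio E y r"
proof -
  have "measure lebesgue (- E \<inter> ball y r) = measure lebesgue (ball y r - E \<inter> ball y r)"
    by (rule arg_cong[where f="measure lebesgue"]) blast
  also have "\<dots> = measure lebesgue (ball y r) - measure lebesgue (E \<inter> ball y r)"
    using assms(1) emeasure_lborel_ball_finite[of y r] by (intro measure_Diff) auto
  finally show ?thesis
    using content_ball_pos[OF assms(2), of y] by (simp add: density_ratio_def diff_divide_distrib)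
qed

lemma density_ratio_pos_imp_norm_less:
  assumes "E \<subseteq> cball 0 R" "0 < density_ratio E y r"
  shows "norm y < R + r"
proof -
  have "E \<inter> ball y r \<noteq> {}"
    using assms(2) by (auto simp: density_ratio_def)
  then obtain x where "x \<in> E" "dist y x < r"
    by auto
  then show ?thesis
    using assms(1) norm_triangle_sub[of y x] by (auto simp: dist_norm norm_minus_commute)
qed

lemma sigma_finite_lebesgue: "sigma_finite_measure (lebesgue :: 'a::euclidean_space measure)"
proof -
  obtain A :: "'a set set" where
    A: "countable A" "A \<subseteq> sets lborel" "\<Union>A = space lborel" "\<forall>a\<in>A. emeasure lborel a \<noteq> \<infinity>"
    using lborel.sigma_finite_countable by blast
  then show ?thesis
    unfolding sigma_finite_measure_def by (intro exI[of _ A]) (auto simp: emeasure_completion)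
qed

lemma borel_measurable_density_ratio:
  fixes E :: "'a::euclidean_space set"
  assumes "E \<in> sets lebesgue"
  shows "(\<lambda>y. density_ratio E y r) \<in> borel_measurable borel"
proof -
  interpret lebesgue: sigma_finite_measure "lebesgue :: 'a measure"
    by (rule sigma_finite_lebesgue)
  have [measurable]: "snd \<in> measurable (borel \<Otimes>\<^sub>M lebesgue) (borel :: 'a measure)"
    by (rule measurable_compose[OF measurable_snd measurable_completion]) simp
  have [measurable]: "E \<in> sets lebesgue" by (rule assms)
  define Q where "Q = {p \<in> space (borel \<Otimes>\<^sub>M lebesgue). snd p \<in> E \<and> dist (fst p) (snd p) < r}"
  have "Q \<in> sets (borel \<Otimes>\<^sub>M lebesgue)"
    unfolding Q_def by measurable
  then have "(\<lambda>y. emeasure lebesgue (Pair y -` Q)) \<in> borel_measurable borel"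
    by (rule lebesgue.measurable_emeasure_Pair)
  moreover have "Pair y -` Q = E \<inter> ball y r" for y
    by (auto simp: Q_def space_pair_measure)
  ultimately have "(\<lambda>y. measure lebesgue (E \<inter> ball y r)) \<in> borel_measurable borel"
    by (simp add: measure_def)
  moreover have "density_ratio E y r = measure lebesgue (E \<inter> ball y r) / measure lebesgue (ball (0::'a) r)" for y
    using measure_translation[of y "ball 0 r"] by (simp add: density_ratio_def)
  ultimately show ?thesis
    by (simp add: borel_measurable_divide)
qed

lemma mollify_set_le_density_ratio:
  fixes y :: "'a::euclidean_space"
  assumes "mollifier \<rho>" "\<epsilon> > 0" "\<And>x. \<rho> x \<le> M" "F \<in> sets lebesgue"
  shows "mollify_set \<rho> \<epsilon> F y
    \<le> M * 2^DIM('a) * measure lebesgue (ball (0::'a) 1) * density_ratio F y (2*\<epsilon>)"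
proof -
  let ?V = "measure lebesgue (ball (0::'a) 1)"
  have "?V > 0"
    using content_ball_pos[of 1 "0::'a"] by simp
  have "measure lebesgue (ball y (2*\<epsilon>)) = (2*\<epsilon>)^DIM('a) * ?V"
    using content_ball_conv_unit_ball[of "2*\<epsilon>" y] assms(2) by simp
  then have ratio: "density_ratio F y (2*\<epsilon>)
      = measure lebesgue (F \<inter> ball y (2*\<epsilon>)) / (2^DIM('a) * \<epsilon>^DIM('a) * ?V)"
    by (simp add: density_ratio_def power_mult_distrib)
  have "mollify_set \<rho> \<epsilon> F y \<le> (1/\<epsilon>)^DIM('a) * M * measure lebesgue (F \<inter> ball y (2*\<epsilon>))"
    by (rule mollify_set_le_measure_Int_ball[OF assms])
  also have "\<dots> = M * 2^DIM('a) * ?V * density_ratio F y (2*\<epsilon>)"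
    unfolding ratio using \<open>?V > 0\<close> assms(2) by (simp add: field_simps)
  finally show ?thesis .
qed

lemma mollify_set_half_density_ratio_bounds:
  fixes \<rho> :: "'a::euclidean_space \<Rightarrow> real"
  assumes "mollifier \<rho>"
  obtains \<delta> where "\<delta> > 0"
    and "\<And>E \<epsilon> y. E \<in> sets lebesgue \<Longrightarrow> \<epsilon> > 0 \<Longrightarrow> 1/2 < mollify_set \<rho> \<epsilon> E y \<Longrightarrow>
           \<delta> \<le> density_ratio E y (2*\<epsilon>)"
    and "\<And>E \<epsilon> y. E \<in> sets lebesgue \<Longrightarrow> \<epsilon> > 0 \<Longrightarrow> mollify_set \<rho> \<epsilon> E y \<le> 1/2 \<Longrightarrow>
           density_ratio E y (2*\<epsilon>) \<le> 1 - \<delta>"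
proof -
  obtain M where "M > 0" and M: "\<And>x. \<rho> x \<le> M"
    using mollifier_bounded[OF assms] by blast
  define K where "K = M * 2^DIM('a) * measure lebesgue (ball (0::'a) 1)"
  have "K > 0"
    using \<open>M > 0\<close> content_ball_pos[of 1 "0::'a"] by (simp add: K_def)
  show ?thesis
  proof (rule that[of "1 / (2*K)"])
    show "1 / (2*K) > 0" using \<open>K > 0\<close> by simp
    fix E :: "'a set" and \<epsilon> :: real and y
    assume E: "E \<in> sets lebesgue" and "\<epsilon> > 0"
    note bound = mollify_set_le_density_ratio[OF assms \<open>\<epsilon> > 0\<close> M, folded K_def]
    show "1 / (2*K) \<le> density_ratio E y (2*\<epsilon>)" if "1/2 < mollify_set \<rho> \<epsilon> E y"
    proof -
      have "1 \<le> 2 * (K * density_ratio E y (2*\<epsilon>))"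
        using bound[OF E, of y] that by linarith
      then show ?thesis
        using \<open>K > 0\<close> by (simp add: pos_divide_le_eq mult_ac)
    qed
    show "density_ratio E y (2*\<epsilon>) \<le> 1 - 1 / (2*K)" if "mollify_set \<rho> \<epsilon> E y \<le> 1/2"
    proof -
      have "- E \<in> sets lebesgue"
        using sets.compl_sets[OF E] by (simp add: Compl_eq_Diff_UNIV)
      from bound[OF this, of y]
      have "1 - mollify_set \<rho> \<epsilon> E y \<le> K * (1 - density_ratio E y (2*\<epsilon>))"
        using E \<open>\<epsilon> > 0\<close> by (simp add: mollify_set_Compl[OF assms] density_ratio_Compl)
      then have "1 \<le> 2 * (K * (1 - density_ratio E y (2*\<epsilon>)))"
        using that by linarith
      then have "1 / (2*K) \<le> 1 - density_ratio E y (2*\<epsilon>)"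
        using \<open>K > 0\<close> by (subst pos_divide_le_eq) (simp_all add: mult_ac)
      then show ?thesis
        by linarith
    qed
  qed
qed

lemma tendsto_emeasure_tail_Union_zero:
  assumes "\<And>j. S j \<in> sets \<mu>" "emeasure \<mu> (\<Union>j. S j) \<noteq> \<infinity>"
    and "\<And>y. \<forall>\<^sub>F j in sequentially. y \<notin> S j"
  shows "(\<lambda>k. emeasure \<mu> (\<Union>j\<in>{k..}. S j)) \<longlonglongrightarrow> 0"
proof -
  have "(\<lambda>k. emeasure \<mu> (\<Union>j\<in>{k..}. S j)) \<longlonglongrightarrow> emeasure \<mu> (\<Inter>k. \<Union>j\<in>{k..}. S j)"
  proof (rule Lim_emeasure_decseq)
    show "range (\<lambda>k. \<Union>j\<in>{k..}. S j) \<subseteq> sets \<mu>"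
      using assms(1) by auto
    show "decseq (\<lambda>k. \<Union>j\<in>{k..}. S j)"
      by (auto simp: decseq_def intro: order_trans)
    show "emeasure \<mu> (\<Union>j\<in>{k..}. S j) \<noteq> \<infinity>" for k
    proof -
      have "emeasure \<mu> (\<Union>j\<in>{k..}. S j) \<le> emeasure \<mu> (\<Union>j. S j)"
        using assms(1) by (intro emeasure_mono) auto
      then show ?thesis
        using assms(2) by (auto simp: top_unique)
    qed
  qed
  moreover have "(\<Inter>k. \<Union>j\<in>{k..}. S j) = {}"
    using assms(3) by (fastforce simp: eventually_sequentially)
  ultimately show ?thesis
    by simp
qed

lemma total_variation_mono:
  assumes "sets \<mu>P = sets borel" "sets \<mu>N = sets borel" "B \<in> sets borel" "A \<subseteq> B"
  shows "total_variation \<mu>P \<mu>N A \<le> total_variation \<mu>P \<mu>N B"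
proof (cases "A \<in> sets borel")
  case True
  then show ?thesis
    using assms unfolding total_variation_def by (intro add_mono emeasure_mono) auto
next
  case False
  then have "emeasure \<mu>P A = 0" "emeasure \<mu>N A = 0"
    using assms by (auto intro: emeasure_notin_sets)
  then show ?thesis
    unfolding total_variation_def by simp
qed

lemma tendsto_total_variation_tail_Union_zero:
  fixes S :: "nat \<Rightarrow> 'a::euclidean_space set"
  assumes "radon_measure \<mu>P" "radon_measure \<mu>N"
    and "\<And>j. S j \<in> sets borel" "\<And>j. S j \<subseteq> cball 0 R"
    and "\<And>y. \<forall>\<^sub>F j in sequentially. y \<notin> S j"
  shows "(\<lambda>k. total_variation \<mu>P \<mu>N (\<Union>j\<in>{k..}. S j)) \<longlonglongrightarrow> 0"
proof -
  have "(\<lambda>k. emeasure \<mu> (\<Union>j\<in>{k..}. S j)) \<longlonglongrightarrow> 0" if "radon_measure \<mu>" for \<mu> :: "'a measure"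
  proof (rule tendsto_emeasure_tail_Union_zero[OF _ _ assms(5)])
    show "S j \<in> sets \<mu>" for j
      using that assms(3) by (simp add: radon_measure_def)
    have "emeasure \<mu> (\<Union>j. S j) \<le> emeasure \<mu> (cball 0 R)"
      using that assms(3,4) by (intro emeasure_mono) (auto simp: radon_measure_def)
    also have "\<dots> < \<infinity>"
      using that by (simp add: radon_measure_def)
    finally show "emeasure \<mu> (\<Union>j. S j) \<noteq> \<infinity>"
      by simp
  qed
  from tendsto_add[OF this[OF assms(1)] this[OF assms(2)]] show ?thesis
    by (simp add: total_variation_def)
qed

lemma eventually_total_variation_less:
  fixes h :: "nat \<Rightarrow> 'a::euclidean_space \<Rightarrow> real"
  assumes "radon_measure \<mu>P" "radon_measure \<mu>N"
    and h_borel: "\<And>k. h k \<in> borel_measurable borel"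
    and "bounded B" "\<delta> > 0" "\<epsilon> > 0"
    and A: "\<forall>\<^sub>F k in sequentially. A k \<subseteq> {y \<in> B. (\<lambda>j. h j y) \<longlonglongrightarrow> a \<and> \<delta> \<le> \<bar>h k y - a\<bar>}"
  shows "\<forall>\<^sub>F k in sequentially. total_variation \<mu>P \<mu>N (A k) < ennreal \<epsilon>"
proof -
  obtain R where "B \<subseteq> cball 0 R"
    using \<open>bounded B\<close> by (auto simp: bounded_iff subset_iff)
  define L where "L = {y. \<forall>\<^sub>F j in sequentially. \<bar>h j y - a\<bar> < \<delta>}"
  define S where "S k = {y \<in> L \<inter> cball 0 R. \<delta> \<le> \<bar>h k y - a\<bar>}" for k
  have S_borel: "S k \<in> sets borel" for k
    using h_borel unfolding S_def L_def by measurable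
  have "S k \<subseteq> cball 0 R" for k
    by (auto simp: S_def)
  moreover have "\<forall>\<^sub>F k in sequentially. y \<notin> S k" for y
    by (cases "y \<in> L") (auto simp: S_def L_def elim: eventually_mono)
  ultimately have "(\<lambda>k. total_variation \<mu>P \<mu>N (\<Union>j\<in>{k..}. S j)) \<longlonglongrightarrow> 0"
    by (rule tendsto_total_variation_tail_Union_zero[OF assms(1,2) S_borel])
  then have "\<forall>\<^sub>F k in sequentially. total_variation \<mu>P \<mu>N (\<Union>j\<in>{k..}. S j) < ennreal \<epsilon>"
    by (rule order_tendstoD(2)) (use \<open>\<epsilon> > 0\<close> in simp)
  moreover have "\<forall>\<^sub>F k in sequentially. A k \<subseteq> S k"
    using A
  proof (rule eventually_mono)
    fix k
    assume "A k \<subseteq> {y \<in> B. (\<lambda>j. h j y) \<longlonglongrightarrow> a \<and> \<delta> \<le> \<bar>h k y - a\<bar>}"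
    moreover have "y \<in> L" if "(\<lambda>j. h j y) \<longlonglongrightarrow> a" for y
      using that \<open>\<delta> > 0\<close> unfolding L_def tendsto_iff dist_real_def by blast
    ultimately show "A k \<subseteq> S k"
      using \<open>B \<subseteq> cball 0 R\<close> by (auto simp: S_def)
  qed
  ultimately show ?thesis
  proof eventually_elim
    case (elim k)
    have "total_variation \<mu>P \<mu>N (A k) \<le> total_variation \<mu>P \<mu>N (\<Union>j\<in>{k..}. S j)"
      using elim(2) S_borel assms(1,2)
      by (intro total_variation_mono) (auto simp: radon_measure_def)
    then show ?case
      using elim(1) by (rule le_less_trans)
  qed
qed

lemma eventually_total_variation_density_deviation_less:
  fixes E :: "'a::euclidean_space set"
  assumes "radon_measure \<mu>P" "radon_measure \<mu>N" "E \<in> sets lebesgue"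
    and "filterlim r (at_right 0) sequentially"
    and "bounded B" "\<delta> > 0" "\<epsilon> > 0"
    and "\<forall>\<^sub>F k in sequentially.
           A k \<subseteq> {y \<in> B \<inter> density_pts E a. \<delta> \<le> \<bar>density_ratio E y (r k) - a\<bar>}"
  shows "\<forall>\<^sub>F k in sequentially. total_variation \<mu>P \<mu>N (A k) < ennreal \<epsilon>"
proof (rule eventually_total_variation_less[OF assms(1,2) _ assms(5-7)])
  show "(\<lambda>y. density_ratio E y (r k)) \<in> borel_measurable borel" for k
    by (rule borel_measurable_density_ratio[OF assms(3)])
  have "(\<lambda>j. density_ratio E y (r j)) \<longlonglongrightarrow> a" if "y \<in> density_pts E a" for y
    using filterlim_compose[OF _ assms(4)] that by (simp add: density_pts_def)
  then show "\<forall>\<^sub>F k in sequentially. A k \<subseteq> {y \<in> B. (\<lambda>j. density_ratio E y (r j)) \<longlonglongrightarrow> a \<and>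
      \<delta> \<le> \<bar>density_ratio E y (r k) - a\<bar>}"
    using assms(8) by (auto elim!: eventually_mono)
qed

lemma filterlim_mult_inverse_real_at_right:
  assumes "c > 0"
  shows "filterlim (\<lambda>k. c * (1 / real k)) (at_right 0) sequentially"
proof (rule tendsto_imp_filterlim_at_right)
  show "(\<lambda>k. c * (1 / real k)) \<longlonglongrightarrow> 0"
    by (intro tendsto_mult_right_zero lim_1_over_n)
  show "\<forall>\<^sub>F k in sequentially. c * (1 / real k) > 0"
    using eventually_gt_at_top[of "0::nat"] by eventually_elim (simp add: assms)
qed

lemma eventually_total_variation_density_one_diff_superlevel_less:
  fixes E :: "'a::euclidean_space set"
  assumes "radon_measure \<mu>P" "radon_measure \<mu>N" "mollifier \<rho>" "E \<in> sets lebesgue" "bounded E"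
    and "density_pts E 1 \<subseteq> E" "\<epsilon> > 0"
  shows "\<forall>\<^sub>F k in sequentially.
    total_variation \<mu>P \<mu>N (density_pts E 1 - {y. 1/2 < mollify_set \<rho> (1 / real k) E y}) < ennreal \<epsilon>"
proof -
  obtain \<delta> where "\<delta> > 0" and below:
    "\<And>\<epsilon> y. \<epsilon> > 0 \<Longrightarrow> mollify_set \<rho> \<epsilon> E y \<le> 1/2 \<Longrightarrow> density_ratio E y (2*\<epsilon>) \<le> 1 - \<delta>"
    using mollify_set_half_density_ratio_bounds[OF assms(3)] assms(4) by metis
  have radii: "filterlim (\<lambda>k. 2 * (1 / real k)) (at_right 0) sequentially"
    by (rule filterlim_mult_inverse_real_at_right) simp
  have "\<forall>\<^sub>F k in sequentially. density_pts E 1 - {y. 1/2 < mollify_set \<rho> (1 / real k) E y}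
      \<subseteq> {y \<in> E \<inter> density_pts E 1. \<delta> \<le> \<bar>density_ratio E y (2 * (1 / real k)) - 1\<bar>}"
    using eventually_gt_at_top[of 0]
  proof eventually_elim
    case (elim k)
    have "\<delta> \<le> \<bar>density_ratio E y (2 * (1 / real k)) - 1\<bar>"
      if "mollify_set \<rho> (1 / real k) E y \<le> 1/2" for y
      using below[of "1 / real k" y] elim that
        abs_ge_minus_self[of "density_ratio E y (2 * (1 / real k)) - 1"]
      by simp
    then show ?case
      using assms(6) by auto
  qed
  then show ?thesis
    by (rule eventually_total_variation_density_deviation_less[OF assms(1,2,4) radii assms(5) \<open>\<delta> > 0\<close> assms(7)])
qed

lemma eventually_total_variation_superlevel_diff_less:
  fixes E :: "'a::euclidean_space set"
  assumes "radon_measure \<mu>P" "radon_measure \<mu>N" "mollifier \<rho>" "E \<in> sets lebesgue" "bounded E"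
    and "- E \<subseteq> density_pts E 0" "\<epsilon> > 0"
  shows "\<forall>\<^sub>F k in sequentially.
    total_variation \<mu>P \<mu>N ({y. 1/2 < mollify_set \<rho> (1 / real k) E y} - E) < ennreal \<epsilon>"
proof -
  obtain \<delta> where "\<delta> > 0" and above:
    "\<And>\<epsilon> y. \<epsilon> > 0 \<Longrightarrow> 1/2 < mollify_set \<rho> \<epsilon> E y \<Longrightarrow> \<delta> \<le> density_ratio E y (2*\<epsilon>)"
    using mollify_set_half_density_ratio_bounds[OF assms(3)] assms(4) by metis
  obtain R where R: "E \<subseteq> cball 0 R"
    using assms(5) by (auto simp: bounded_iff subset_iff)
  have radii: "filterlim (\<lambda>k. 2 * (1 / real k)) (at_right 0) sequentially"
    by (rule filterlim_mult_inverse_real_at_right) simp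
  have "\<forall>\<^sub>F k in sequentially. {y. 1/2 < mollify_set \<rho> (1 / real k) E y} - E
      \<subseteq> {y \<in> ball 0 (R + 2) \<inter> density_pts E 0. \<delta> \<le> \<bar>density_ratio E y (2 * (1 / real k)) - 0\<bar>}"
    using eventually_gt_at_top[of 0]
  proof eventually_elim
    case (elim k)
    then have "1 \<le> real k"
      by simp
    then have "ball 0 (R + 2 * (1 / real k)) \<subseteq> ball (0::'a) (R + 2)"
      by (intro subset_ball) (simp add: divide_le_eq)
    moreover have "\<delta> \<le> density_ratio E y (2 * (1 / real k))"
      if "1/2 < mollify_set \<rho> (1 / real k) E y" for y
      using above[of "1 / real k" y] elim that by simp
    ultimately show ?case
      using density_ratio_pos_imp_norm_less[OF R] \<open>\<delta> > 0\<close> assms(6) by fastforce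
  qed
  then show ?thesis
    by (rule eventually_total_variation_density_deviation_less[OF assms(1,2,4) radii bounded_ball \<open>\<delta> > 0\<close> assms(7)])
qed

theorem lemma4p5:
  fixes \<mu>P \<mu>N :: "'a::euclidean_space measure"
    and E :: "'a set" and \<rho> :: "'a \<Rightarrow> real"
  assumes "signed_radon \<mu>P \<mu>N"
    and "abs_cont_hausdorff \<mu>P \<mu>N"
    and "bounded E" and "finite_perimeter E"
    and "E = density_pts E 1 \<union> meas_boundary E"
    and "mollifier \<rho>"
  shows "\<forall>\<epsilon>>0. \<exists>k0::nat. \<forall>k\<ge>k0.
           total_variation \<mu>P \<mu>N (density_pts E 1 - {y. mollify_set \<rho> (1 / real k) E y > 1/2}) < ennreal \<epsilon> \<and>
           total_variation \<mu>P \<mu>N ({y. mollify_set \<rho> (1 / real k) E y > 1/2} - E) < ennreal \<epsilon>"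
proof (intro allI impI)
  fix \<epsilon> :: real
  assume "\<epsilon> > 0"
  have radon: "radon_measure \<mu>P" "radon_measure \<mu>N"
    using assms(1) by (auto simp: signed_radon_def)
  have E: "E \<in> sets lebesgue"
    using assms(4) by (simp add: finite_perimeter_def)
  have E1: "density_pts E 1 \<subseteq> E" and E0: "- E \<subseteq> density_pts E 0"
    using assms(5) unfolding meas_boundary_def by blast+
  show "\<exists>k0::nat. \<forall>k\<ge>k0.
           total_variation \<mu>P \<mu>N (density_pts E 1 - {y. mollify_set \<rho> (1 / real k) E y > 1/2}) < ennreal \<epsilon> \<and>
           total_variation \<mu>P \<mu>N ({y. mollify_set \<rho> (1 / real k) E y > 1/2} - E) < ennreal \<epsilon>"
    using eventually_conj[OF
        eventually_total_variation_density_one_diff_superlevel_less[OF radon assms(6) E assms(3) E1 \<open>\<epsilon> > 0\<close>]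
        eventually_total_variation_superlevel_diff_less[OF radon assms(6) E assms(3) E0 \<open>\<epsilon> > 0\<close>]]
    unfolding eventually_sequentially .
qed

end
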